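(* Let $M$ be a timelike surface in $\mathbb{R}^{n,1}$ with a canonical null direction with respect to a constant unit spacelike vector $Z$, and let $W$ be as below. Then $$\nabla^\perp_W\vec H=-\nabla^\perp_{Z^\top}\big(II(W,W)\big),\qquad |\vec H|^2=-\langle\nabla^\perp_W\vec H,Z^\perp\rangle,$$ and the Gaussian curvature satisfies $$K=|\vec H|^2-\langle II(W,W),II(Z^\top,Z^\top)\rangle.$$
   Context: $\mathbb{R}^{n,1}$ is $\mathbb{R}^{n+1}$ with the metric $-dx_1^2+dx_2^2+\dots+dx_{n+1}^2$. A surface is timelike if the induced metric has signature $(1,1)$; a vector $v$ is lightlike if $v\ne0$ and $\langle v,v\rangle=0$. For a constant vector $Z$, $Z=Z^\top+Z^\perp$ along $M$; $M$ has a canonical null direction with respect to $Z$ if $Z^\top$ is lightlike everywhere on $M$. $W$ is the unique lightlike tangent field with $\langle Z^\top,W\rangle=-1$. $II$ is the second fundamental form, $\nabla^\perp$ the normal connection, $\vec H=\frac12\operatorname{tr}_{\langle,\rangle}II$ the mean curvature vector (which equals $-II(Z^\top,W)$), $|\vec H|^2:=\langle\vec H,\vec H\rangle$, and $K$ the Gaussian curvature of $M$. *)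

theory Defs
  imports "HOL-Analysis.Analysis"
begin

text \<open>Minkowski space R^{n,1} is modelled as real \<times> real^'n: the first component is the
 time coordinate x_1, the second the space coordinates x_2..x_{n+1}.
 A surface is given by a local parametrisation X defined on an open set U of R^2 = real \<times> real.\<close>

type_synonym 'n mink = "real \<times> (real ^ 'n)"

definition mink :: "'n::finite mink \<Rightarrow> 'n mink \<Rightarrow> real" where
  "mink x y = - fst x * fst y + snd x \<bullet> snd y"

fun dd :: "(real \<times> real) list \<Rightarrow> (real \<times> real \<Rightarrow> 'a::real_normed_vector) \<Rightarrow> real \<times> real \<Rightarrow> 'a" where
  "dd [] f = f"
| "dd (h # hs) f = (\<lambda>p. frechet_derivative (dd hs f) (at p) h)"

definition smooth_on :: "(real \<times> real) set \<Rightarrow> (real \<times> real \<Rightarrow> 'a::real_normed_vector) \<Rightarrow> bool" where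
  "smooth_on U f \<longleftrightarrow> (\<forall>hs. \<forall>p\<in>U. dd hs f differentiable (at p))"

definition ebasis :: "nat \<Rightarrow> real \<times> real" where
  "ebasis i = (if i = 0 then (1, 0) else (0, 1))"

definition ctan :: "(real \<times> real \<Rightarrow> 'n::finite mink) \<Rightarrow> real \<times> real \<Rightarrow> nat \<Rightarrow> 'n mink" where
  "ctan X p i = frechet_derivative X (at p) (ebasis i)"

definition metric :: "(real \<times> real \<Rightarrow> 'n::finite mink) \<Rightarrow> real \<times> real \<Rightarrow> nat \<Rightarrow> nat \<Rightarrow> real" where
  "metric X p i j = mink (ctan X p i) (ctan X p j)"

definition gdet :: "(real \<times> real \<Rightarrow> 'n::finite mink) \<Rightarrow> real \<times> real \<Rightarrow> real" where
  "gdet X p = metric X p 0 0 * metric X p 1 1 - metric X p 0 1 * metric X p 1 0"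

definition ginv :: "(real \<times> real \<Rightarrow> 'n::finite mink) \<Rightarrow> real \<times> real \<Rightarrow> nat \<Rightarrow> nat \<Rightarrow> real" where
  "ginv X p i j =
     (if i = 0 \<and> j = 0 then metric X p 1 1 / gdet X p
      else if i = 1 \<and> j = 1 then metric X p 0 0 / gdet X p
      else - metric X p 0 1 / gdet X p)"

definition tangent_space :: "(real \<times> real \<Rightarrow> 'n::finite mink) \<Rightarrow> real \<times> real \<Rightarrow> 'n mink set" where
  "tangent_space X p = span {ctan X p 0, ctan X p 1}"

definition tproj :: "(real \<times> real \<Rightarrow> 'n::finite mink) \<Rightarrow> real \<times> real \<Rightarrow> 'n mink \<Rightarrow> 'n mink" where
  "tproj X p v = (\<Sum>i<2. \<Sum>j<2. (ginv X p i j * mink v (ctan X p j)) *\<^sub>R ctan X p i)"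

definition nproj :: "(real \<times> real \<Rightarrow> 'n::finite mink) \<Rightarrow> real \<times> real \<Rightarrow> 'n mink \<Rightarrow> 'n mink" where
  "nproj X p v = v - tproj X p v"

text \<open>Coordinates (a,b) of a tangent vector v = a \<partial>_0 X + b \<partial>_1 X.\<close>
definition coord :: "(real \<times> real \<Rightarrow> 'n::finite mink) \<Rightarrow> real \<times> real \<Rightarrow> 'n mink \<Rightarrow> real \<times> real" where
  "coord X p v = (\<Sum>i<2. \<Sum>j<2. (ginv X p i j * mink v (ctan X p j)) *\<^sub>R ebasis i)"

definition dirD :: "(real \<times> real \<Rightarrow> 'n::finite mink) \<Rightarrow> (real \<times> real \<Rightarrow> 'n mink) \<Rightarrow> real \<times> real \<Rightarrow> 'n mink \<Rightarrow> 'n mink" where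
  "dirD X F p v = frechet_derivative F (at p) (coord X p v)"

text \<open>Second fundamental form II(v,w) = (D_v w~)^\<perp>, computed from the second derivative of X.\<close>
definition II :: "(real \<times> real \<Rightarrow> 'n::finite mink) \<Rightarrow> real \<times> real \<Rightarrow> 'n mink \<Rightarrow> 'n mink \<Rightarrow> 'n mink" where
  "II X p v w = nproj X p
     (frechet_derivative (\<lambda>q. frechet_derivative X (at q) (coord X p w)) (at p) (coord X p v))"

definition Hvec :: "(real \<times> real \<Rightarrow> 'n::finite mink) \<Rightarrow> real \<times> real \<Rightarrow> 'n mink" where
  "Hvec X p = (1/2) *\<^sub>R (\<Sum>i<2. \<Sum>j<2. ginv X p i j *\<^sub>R II X p (ctan X p i) (ctan X p j))"

definition nabla_perp :: "(real \<times> real \<Rightarrow> 'n::finite mink) \<Rightarrow> (real \<times> real \<Rightarrow> 'n mink) \<Rightarrow> real \<times> real \<Rightarrow> 'n mink \<Rightarrow> 'n mink" where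
  "nabla_perp X \<xi> p v = nproj X p (dirD X \<xi> p v)"

text \<open>Intrinsic Gaussian curvature of the induced metric: Christoffel symbols,
 Riemann tensor R(\<partial>_i,\<partial>_j)\<partial>_k = R^l_ijk \<partial>_l with
 R(X,Y)Z = \<nabla>_X\<nabla>_Y Z - \<nabla>_Y\<nabla>_X Z - \<nabla>_[X,Y] Z, and K = g(R(\<partial>_0,\<partial>_1)\<partial>_1,\<partial>_0)/det g.\<close>
definition dmetric :: "(real \<times> real \<Rightarrow> 'n::finite mink) \<Rightarrow> real \<times> real \<Rightarrow> nat \<Rightarrow> nat \<Rightarrow> nat \<Rightarrow> real" where
  "dmetric X p i j l = frechet_derivative (\<lambda>q. metric X q j l) (at p) (ebasis i)"

definition christoffel :: "(real \<times> real \<Rightarrow> 'n::finite mink) \<Rightarrow> real \<times> real \<Rightarrow> nat \<Rightarrow> nat \<Rightarrow> nat \<Rightarrow> real" where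
  "christoffel X p k i j = (1/2) * (\<Sum>l<2. ginv X p k l *
      (dmetric X p i j l + dmetric X p j i l - dmetric X p l i j))"

definition riemann :: "(real \<times> real \<Rightarrow> 'n::finite mink) \<Rightarrow> real \<times> real \<Rightarrow> nat \<Rightarrow> nat \<Rightarrow> nat \<Rightarrow> nat \<Rightarrow> real" where
  "riemann X p l i j k =
     frechet_derivative (\<lambda>q. christoffel X q l j k) (at p) (ebasis i)
   - frechet_derivative (\<lambda>q. christoffel X q l i k) (at p) (ebasis j)
   + (\<Sum>m<2. christoffel X p l i m * christoffel X p m j k
             - christoffel X p l j m * christoffel X p m i k)"

definition gaussK :: "(real \<times> real \<Rightarrow> 'n::finite mink) \<Rightarrow> real \<times> real \<Rightarrow> real" where
  "gaussK X p = (\<Sum>l<2. riemann X p l 0 1 1 * metric X p l 0) / gdet X p"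

text \<open>Timelike surface: smooth parametrisation on an open set whose induced metric has
 signature (1,1), i.e. negative determinant (this also forces X to be an immersion).\<close>
definition timelike_surface :: "(real \<times> real) set \<Rightarrow> (real \<times> real \<Rightarrow> 'n::finite mink) \<Rightarrow> bool" where
  "timelike_surface U X \<longleftrightarrow> open U \<and> smooth_on U X \<and> (\<forall>p\<in>U. gdet X p < 0)"

definition lightlike :: "'n::finite mink \<Rightarrow> bool" where
  "lightlike v \<longleftrightarrow> v \<noteq> 0 \<and> mink v v = 0"

definition canonical_null_direction :: "(real \<times> real) set \<Rightarrow> (real \<times> real \<Rightarrow> 'n::finite mink) \<Rightarrow> 'n mink \<Rightarrow> bool" where
  "canonical_null_direction U X Z \<longleftrightarrow> (\<forall>p\<in>U. lightlike (tproj X p Z))"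

end

theory Submission
  imports Defs
begin

text \<open>In the null frame \<open>T = Z\<^sup>\<top>\<close>, \<open>W\<close>
  of the tangent plane the inverse metric is \<open>-(T \<otimes> W + W \<otimes> T)\<close>, so \<open>H = -II(T,W)\<close>, and the
  Gauss equation \<open>K det g = \<langle>II\<^sub>1\<^sub>1, II\<^sub>0\<^sub>0\<rangle> - |II\<^sub>0\<^sub>1|\<^sup>2\<close>, rewritten in the null frame, gives the
  formula for \<open>K\<close>.  Since \<open>Z\<close> is constant, differentiating \<open>\<langle>Z\<^sup>\<perp>, \<partial>X\<rangle> = 0\<close> shows
  \<open>\<langle>Z\<^sup>\<perp>, II(\<cdot>,T)\<rangle> = 0\<close> and expresses the derivatives of \<open>T\<close> and \<open>W\<close> by one function
  \<open>\<kappa> = \<langle>Z\<^sup>\<perp>, II(\<cdot>,W)\<rangle>\<close> and the Christoffel symbols.  Substituting these into the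
  derivatives of \<open>H = -II(T,W)\<close> along \<open>W\<close> and of \<open>II(W,W)\<close> along \<open>T\<close>, the \<open>\<kappa>\<close>-terms
  cancel and the two results agree up to sign (by symmetry of third derivatives);
  differentiating \<open>\<langle>H, Z\<^sup>\<perp>\<rangle> = 0\<close> along \<open>W\<close> gives \<open>|H|\<^sup>2 = -\<langle>\<nabla>\<^sup>\<perp>\<^sub>W H, Z\<^sup>\<perp>\<rangle>\<close>.\<close>

section \<open>Symmetry of second derivatives\<close>

text \<open>The second difference \<open>f(x+hu+hv) - f(x+hu) - f(x+hv) + f(x)\<close> is symmetric in
  \<open>u, v\<close>; by the mean value theorem, divided by \<open>h\<^sup>2\<close> it tends to \<open>D(D f \<cdot> u) \<cdot> v\<close>.\<close>

lemma second_difference_mvt: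
  fixes f :: "'a::real_normed_vector \<Rightarrow> real"
  assumes df: "\<And>q. norm (q - x) < r \<Longrightarrow> (f has_derivative Df q) (at q)"
    and h: "0 < h" "h * (norm u + norm v) < r"
  shows "\<exists>\<xi>\<in>{0..h}. f (x + h *\<^sub>R u + h *\<^sub>R v) - f (x + h *\<^sub>R u) - f (x + h *\<^sub>R v) + f x
           = h * (Df (x + \<xi> *\<^sub>R u + h *\<^sub>R v) u - Df (x + \<xi> *\<^sub>R u) u)"
proof -
  have near: "norm ((x + s *\<^sub>R u + t *\<^sub>R v) - x) < r" if "0 \<le> s" "s \<le> h" "0 \<le> t" "t \<le> h" for s t
  proof -
    have "norm (s *\<^sub>R u + t *\<^sub>R v) \<le> s * norm u + t * norm v"
      using norm_triangle_ineq[of "s *\<^sub>R u" "t *\<^sub>R v"] that by simp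
    also have "\<dots> \<le> h * (norm u + norm v)"
      using that by (simp add: distrib_left add_mono mult_right_mono)
    finally show ?thesis using h(2) by (simp add: add.assoc)
  qed
  define g where "g s = f (x + s *\<^sub>R u + h *\<^sub>R v) - f (x + s *\<^sub>R u + 0 *\<^sub>R v)" for s
  have der: "(g has_derivative (\<lambda>d. d * (Df (x + s *\<^sub>R u + h *\<^sub>R v) u - Df (x + s *\<^sub>R u + 0 *\<^sub>R v) u)))
          (at s within {0..h})" if "0 \<le> s" "s \<le> h" for s
  proof -
    have chain: "((\<lambda>s. f (x + s *\<^sub>R u + t *\<^sub>R v)) has_derivative (\<lambda>d. d * Df (x + s *\<^sub>R u + t *\<^sub>R v) u))
        (at s within {0..h})" if "0 \<le> t" "t \<le> h" for t
    proof -
      let ?y = "x + s *\<^sub>R u + t *\<^sub>R v"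
      have dF: "(f has_derivative Df ?y) (at ?y)"
        using df[OF near] \<open>0 \<le> s\<close> \<open>s \<le> h\<close> that by blast
      have line: "((\<lambda>s. x + s *\<^sub>R u + t *\<^sub>R v) has_derivative (\<lambda>d. d *\<^sub>R u)) (at s within {0..h})"
        by (auto intro!: derivative_eq_intros)
      show ?thesis
        using has_derivative_compose[OF line has_derivative_at_withinI[OF dF]]
          linear_scale[OF has_derivative_linear[OF dF]]
        by (simp add: o_def)
    qed
    show ?thesis
      unfolding g_def using has_derivative_diff[OF chain[of h] chain[of 0]] h(1)
      by (simp add: algebra_simps)
  qed
  have "\<exists>\<xi>\<in>{0..h}. g h - g 0
      = (h - 0) * (Df (x + \<xi> *\<^sub>R u + h *\<^sub>R v) u - Df (x + \<xi> *\<^sub>R u + 0 *\<^sub>R v) u)"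
    by (rule mvt_very_simple) (use der h(1) in auto)
  then show ?thesis by (simp add: g_def algebra_simps)
qed

lemma second_difference_bound:
  fixes f :: "'a::real_normed_vector \<Rightarrow> real"
  assumes df: "\<And>q. norm (q - x) < r \<Longrightarrow> (f has_derivative Df q) (at q)"
    and L: "linear L"
    and approx: "\<And>y. norm (y - x) < d \<Longrightarrow> norm (Df y u - Df x u - L (y - x)) \<le> \<epsilon> * norm (y - x)"
    and \<epsilon>: "0 \<le> \<epsilon>" and h: "0 < h" "h * (norm u + norm v) < min r d"
  shows "\<bar>(f (x + h *\<^sub>R u + h *\<^sub>R v) - f (x + h *\<^sub>R u) - f (x + h *\<^sub>R v) + f x) / h\<^sup>2 - L v\<bar>
           \<le> 2 * \<epsilon> * (norm u + norm v)"
proof -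
  let ?M = "norm u + norm v"
  obtain \<xi> where \<xi>: "\<xi> \<in> {0..h}"
    and mvt: "f (x + h *\<^sub>R u + h *\<^sub>R v) - f (x + h *\<^sub>R u) - f (x + h *\<^sub>R v) + f x
               = h * (Df (x + \<xi> *\<^sub>R u + h *\<^sub>R v) u - Df (x + \<xi> *\<^sub>R u) u)"
  proof -
    have "h * (norm u + norm v) < r" using h(2) by simp
    then show ?thesis using second_difference_mvt[OF df h(1)] that by blast
  qed
  have close: "\<bar>Df (x + y) u - Df x u - L y\<bar> \<le> \<epsilon> * (h * ?M)" if "norm y \<le> h * ?M" for y
  proof -
    have "\<bar>Df (x + y) u - Df x u - L y\<bar> \<le> \<epsilon> * norm y"
      using approx[of "x + y"] that h(2) by simp
    also have "\<dots> \<le> \<epsilon> * (h * ?M)" using that \<epsilon> by (rule mult_left_mono)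
    finally show ?thesis .
  qed
  have "norm (\<xi> *\<^sub>R u + h *\<^sub>R v) \<le> \<xi> * norm u + h * norm v"
    using norm_triangle_ineq[of "\<xi> *\<^sub>R u" "h *\<^sub>R v"] \<xi> by simp
  also have "\<dots> \<le> h * ?M"
    using \<xi> mult_right_mono[of \<xi> h "norm u"] by (simp add: distrib_left)
  finally have c1: "\<bar>Df (x + \<xi> *\<^sub>R u + h *\<^sub>R v) u - Df x u - L (\<xi> *\<^sub>R u + h *\<^sub>R v)\<bar> \<le> \<epsilon> * (h * ?M)"
    using close by (simp add: add.assoc)
  have "norm (\<xi> *\<^sub>R u) \<le> h * norm u" using \<xi> mult_right_mono[of \<xi> h "norm u"] by simp
  also have "\<dots> \<le> h * ?M" using h(1) by simp
  finally have c2: "\<bar>Df (x + \<xi> *\<^sub>R u) u - Df x u - L (\<xi> *\<^sub>R u)\<bar> \<le> \<epsilon> * (h * ?M)"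
    using close by simp
  have "L (\<xi> *\<^sub>R u + h *\<^sub>R v) - L (\<xi> *\<^sub>R u) = h * L v"
    by (simp add: linear_add[OF L] linear_scale[OF L])
  then have "\<bar>(Df (x + \<xi> *\<^sub>R u + h *\<^sub>R v) u - Df (x + \<xi> *\<^sub>R u) u) - h * L v\<bar> \<le> h * (2 * \<epsilon> * ?M)"
    using c1 c2 by (simp add: algebra_simps)
  moreover have "(f (x + h *\<^sub>R u + h *\<^sub>R v) - f (x + h *\<^sub>R u) - f (x + h *\<^sub>R v) + f x) / h\<^sup>2 - L v
      = ((Df (x + \<xi> *\<^sub>R u + h *\<^sub>R v) u - Df (x + \<xi> *\<^sub>R u) u) - h * L v) / h"
    using h(1) unfolding mvt by (simp add: power2_eq_square field_simps)
  ultimately show ?thesis using h(1) by (simp add: divide_le_eq mult.commute)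
qed

lemma second_difference_tendsto:
  fixes f :: "'a::real_normed_vector \<Rightarrow> real"
  assumes r: "0 < r"
    and df: "\<And>q. norm (q - x) < r \<Longrightarrow> (f has_derivative Df q) (at q)"
    and dDf: "((\<lambda>q. Df q u) has_derivative L) (at x)"
  shows "((\<lambda>h. (f (x + h *\<^sub>R u + h *\<^sub>R v) - f (x + h *\<^sub>R u) - f (x + h *\<^sub>R v) + f x) / h\<^sup>2)
           \<longlongrightarrow> L v) (at_right 0)"
proof (rule tendstoI)
  fix e :: real
  assume e: "0 < e"
  define M where "M = norm u + norm v"
  have M: "0 \<le> M" by (simp add: M_def)
  have "\<forall>\<epsilon>>0. \<exists>d>0. \<forall>y. norm (y - x) < d \<longrightarrow> norm (Df y u - Df x u - L (y - x)) \<le> \<epsilon> * norm (y - x)"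
    using dDf unfolding has_derivative_at_alt by blast
  moreover have "0 < e / (2 * (M + 1))" using e M by simp
  ultimately obtain d where d: "0 < d"
    and approx: "\<And>y. norm (y - x) < d \<Longrightarrow> norm (Df y u - Df x u - L (y - x)) \<le> e / (2 * (M + 1)) * norm (y - x)"
    by blast
  have "dist ((f (x + h *\<^sub>R u + h *\<^sub>R v) - f (x + h *\<^sub>R u) - f (x + h *\<^sub>R v) + f x) / h\<^sup>2) (L v) < e"
    if h: "0 < h" "h < min r d / (M + 1)" for h
  proof -
    have "h * (M + 1) < min r d" using h M by (simp add: pos_less_divide_eq)
    moreover have "h * M \<le> h * (M + 1)" using h(1) by simp
    ultimately have "h * M < min r d" by linarith
    then have "dist ((f (x + h *\<^sub>R u + h *\<^sub>R v) - f (x + h *\<^sub>R u) - f (x + h *\<^sub>R v) + f x) / h\<^sup>2) (L v)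
        \<le> 2 * (e / (2 * (M + 1))) * M"
      unfolding dist_real_def M_def
      using second_difference_bound[OF df has_derivative_linear[OF dDf] approx] e M h(1)
      by (simp add: M_def)
    also have "\<dots> < e" using e M by (simp add: field_simps)
    finally show ?thesis .
  qed
  moreover have "0 < min r d / (M + 1)" using r d M by simp
  ultimately show "\<forall>\<^sub>F h in at_right 0.
      dist ((f (x + h *\<^sub>R u + h *\<^sub>R v) - f (x + h *\<^sub>R u) - f (x + h *\<^sub>R v) + f x) / h\<^sup>2) (L v) < e"
    unfolding eventually_at_right_field by auto
qed

lemma second_derivative_symmetric:
  fixes f :: "'a::real_normed_vector \<Rightarrow> 'b::real_inner"
  assumes r: "0 < r"
    and df: "\<And>q. norm (q - x) < r \<Longrightarrow> (f has_derivative Df q) (at q)"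
    and du: "((\<lambda>q. Df q u) has_derivative Lu) (at x)"
    and dv: "((\<lambda>q. Df q v) has_derivative Lv) (at x)"
  shows "Lu v = Lv u"
proof -
  have "Lu v \<bullet> b = Lv u \<bullet> b" for b
  proof -
    let ?f = "\<lambda>q. f q \<bullet> b" and ?Df = "\<lambda>q h. Df q h \<bullet> b"
    have df': "(?f has_derivative ?Df q) (at q)" if "norm (q - x) < r" for q
      using has_derivative_inner_left[OF df[OF that]] .
    have "((\<lambda>h. (?f (x + h *\<^sub>R u + h *\<^sub>R v) - ?f (x + h *\<^sub>R u) - ?f (x + h *\<^sub>R v) + ?f x) / h\<^sup>2)
           \<longlongrightarrow> Lu v \<bullet> b) (at_right 0)"
      using second_difference_tendsto[OF r df' has_derivative_inner_left[OF du]] .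
    moreover have "((\<lambda>h. (?f (x + h *\<^sub>R u + h *\<^sub>R v) - ?f (x + h *\<^sub>R u) - ?f (x + h *\<^sub>R v) + ?f x) / h\<^sup>2)
           \<longlongrightarrow> Lv u \<bullet> b) (at_right 0)"
      using second_difference_tendsto[OF r df' has_derivative_inner_left[OF dv], of u]
      by (simp add: algebra_simps)
    ultimately show ?thesis by (rule tendsto_unique[rotated]) simp
  qed
  then have "(Lu v - Lv u) \<bullet> (Lu v - Lv u) = 0" by (simp add: inner_diff_left)
  then show ?thesis by simp
qed

section \<open>The Minkowski form and coordinate derivatives\<close>

lemma mink_commute: "mink x y = mink y x"
  unfolding mink_def by (simp add: inner_commute mult.commute)

lemma mink_add_left [simp]: "mink (x + y) z = mink x z + mink y z"
  and mink_add_right [simp]: "mink z (x + y) = mink z x + mink z y"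
  and mink_diff_left [simp]: "mink (x - y) z = mink x z - mink y z"
  and mink_diff_right [simp]: "mink z (x - y) = mink z x - mink z y"
  and mink_scaleR_left [simp]: "mink (c *\<^sub>R x) z = c * mink x z"
  and mink_scaleR_right [simp]: "mink z (c *\<^sub>R x) = c * mink z x"
  and mink_minus_left [simp]: "mink (- x) z = - mink x z"
  and mink_minus_right [simp]: "mink z (- x) = - mink z x"
  unfolding mink_def by (simp_all add: inner_add_left inner_add_right inner_diff_left inner_diff_right
      algebra_simps)

lemma has_derivative_mink:
  assumes "(F has_derivative F') (at p)" "(G has_derivative G') (at p)"
  shows "((\<lambda>q. mink (F q) (G q)) has_derivative (\<lambda>h. mink (F' h) (G p) + mink (F p) (G' h))) (at p)"
proof -
  have "((\<lambda>q. - fst (F q) * fst (G q) + snd (F q) \<bullet> snd (G q)) has_derivative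
     (\<lambda>h. (- fst (F p) * fst (G' h) + - fst (F' h) * fst (G p)) +
          (snd (F p) \<bullet> snd (G' h) + snd (F' h) \<bullet> snd (G p)))) (at p)"
    by (intro has_derivative_add has_derivative_minus has_derivative_mult has_derivative_inner
        has_derivative_fst has_derivative_snd assms)
  then show ?thesis unfolding mink_def by (simp add: algebra_simps inner_commute)
qed

lemma differentiable_mink [derivative_intros]:
  "F differentiable (at p) \<Longrightarrow> G differentiable (at p) \<Longrightarrow> (\<lambda>q. mink (F q) (G q)) differentiable (at p)"
  using has_derivative_mink unfolding differentiable_def by blast

lemma differentiable_fst [derivative_intros]: "f differentiable F \<Longrightarrow> (\<lambda>x. fst (f x)) differentiable F"
  and differentiable_snd [derivative_intros]: "f differentiable F \<Longrightarrow> (\<lambda>x. snd (f x)) differentiable F"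
  unfolding differentiable_def using has_derivative_fst has_derivative_snd by blast+

lemma sum_lessThan_2: "(\<Sum>i<2. f i) = f 0 + f (1::nat)"
  by (simp add: numeral_2_eq_2)

lemma linear_pair_expand:
  assumes "linear (L :: real \<times> real \<Rightarrow> 'a::real_vector)"
  shows "L a = fst a *\<^sub>R L (1, 0) + snd a *\<^sub>R L (0, 1)"
proof -
  have "L a = L (fst a *\<^sub>R (1, 0) + snd a *\<^sub>R (0, 1))" by simp
  also have "\<dots> = fst a *\<^sub>R L (1, 0) + snd a *\<^sub>R L (0, 1)"
    by (simp only: linear_add[OF assms] linear_scale[OF assms])
  finally show ?thesis .
qed

lemma has_derivative_unique_on_open:
  assumes "(f has_derivative F) (at p)" "(g has_derivative G) (at p)" "open U" "p \<in> U"
    and "\<And>q. q \<in> U \<Longrightarrow> f q = g q"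
  shows "F = G"
  using has_derivative_transform_within_open[OF assms(1,3,4)] assms(2,5) has_derivative_unique
  by metis

lemma inner_ebasis: "v \<bullet> ebasis k = (if k = 0 then fst v else snd v)"
  by (simp add: ebasis_def inner_prod_def)

definition d1 :: "(real \<times> real \<Rightarrow> 'a::real_normed_vector) \<Rightarrow> real \<times> real \<Rightarrow> real \<times> real \<Rightarrow> 'a" where
  "d1 X q a = frechet_derivative X (at q) a"

definition d2 :: "(real \<times> real \<Rightarrow> 'a::real_normed_vector) \<Rightarrow> real \<times> real \<Rightarrow> real \<times> real \<Rightarrow> real \<times> real \<Rightarrow> 'a" where
  "d2 X q a b = frechet_derivative (\<lambda>q. d1 X q b) (at q) a"

definition d3 :: "(real \<times> real \<Rightarrow> 'a::real_normed_vector) \<Rightarrow> real \<times> real \<Rightarrow> real \<times> real \<Rightarrow> real \<times> real \<Rightarrow> real \<times> real \<Rightarrow> 'a" where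
  "d3 X q a b c = frechet_derivative (\<lambda>q. d2 X q b c) (at q) a"

section \<open>Timelike parametrised surfaces\<close>

locale timelike_param =
  fixes U :: "(real \<times> real) set" and X :: "real \<times> real \<Rightarrow> 'n::finite mink"
  assumes timelike: "timelike_surface U X"
begin

lemma open_U: "open U"
  using timelike by (simp add: timelike_surface_def)

lemma gdet_nonzero: "p \<in> U \<Longrightarrow> gdet X p \<noteq> 0"
  using timelike by (auto simp: timelike_surface_def)

lemma dd_differentiable: "p \<in> U \<Longrightarrow> dd hs X differentiable (at p)"
  using timelike by (simp add: timelike_surface_def smooth_on_def)

lemma has_derivative_X: "p \<in> U \<Longrightarrow> (X has_derivative d1 X p) (at p)"
  using dd_differentiable[of p "[]"] unfolding d1_def by (simp add: frechet_derivative_works)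

lemma has_derivative_d1: "p \<in> U \<Longrightarrow> ((\<lambda>q. d1 X q b) has_derivative (\<lambda>a. d2 X p a b)) (at p)"
proof -
  have "dd [b] X = (\<lambda>q. d1 X q b)" by (simp add: d1_def fun_eq_iff)
  then show "p \<in> U \<Longrightarrow> ?thesis"
    using dd_differentiable[of p "[b]"] by (simp add: frechet_derivative_works d2_def[abs_def])
qed

lemma has_derivative_d2: "p \<in> U \<Longrightarrow> ((\<lambda>q. d2 X q b c) has_derivative (\<lambda>a. d3 X p a b c)) (at p)"
proof -
  have "dd [b, c] X = (\<lambda>q. d2 X q b c)" by (simp add: d1_def d2_def fun_eq_iff)
  then show "p \<in> U \<Longrightarrow> ?thesis"
    using dd_differentiable[of p "[b, c]"] by (simp add: frechet_derivative_works d3_def[abs_def])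
qed

lemma ball_subset_U:
  assumes "p \<in> U" obtains r where "0 < r" "\<And>q. norm (q - p) < r \<Longrightarrow> q \<in> U"
  using open_U assms unfolding open_dist by (metis dist_norm dist_commute)

lemma d2_commute: assumes p: "p \<in> U" shows "d2 X p a b = d2 X p b a"
proof -
  obtain r where r: "0 < r" "\<And>q. norm (q - p) < r \<Longrightarrow> q \<in> U" using ball_subset_U[OF p] by blast
  show ?thesis
    by (rule second_derivative_symmetric[where f = X and Df = "d1 X", OF r(1)])
      (auto intro: has_derivative_X has_derivative_d1 p r(2))
qed

lemma d3_commute: assumes p: "p \<in> U" shows "d3 X p a b c = d3 X p b a c"
proof -
  obtain r where r: "0 < r" "\<And>q. norm (q - p) < r \<Longrightarrow> q \<in> U" using ball_subset_U[OF p] by blast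
  show ?thesis
    by (rule second_derivative_symmetric[where f = "\<lambda>q. d1 X q c" and Df = "\<lambda>q a. d2 X q a c", OF r(1)])
      (auto intro: has_derivative_d1 has_derivative_d2 p r(2))
qed

lemma linear_d1: "p \<in> U \<Longrightarrow> linear (d1 X p)"
  using has_derivative_X has_derivative_linear by blast

lemma linear_d2_left: "p \<in> U \<Longrightarrow> linear (\<lambda>a. d2 X p a b)"
  using has_derivative_d1 has_derivative_linear by blast

lemma bilinear_d2: assumes p: "p \<in> U" shows "bilinear (d2 X p)"
proof -
  have "linear (\<lambda>b. d2 X p a b)" for a
  proof -
    have eq: "(\<lambda>b. d2 X p b a) = (\<lambda>b. d2 X p a b)" by (rule ext) (rule d2_commute[OF p])
    show ?thesis using linear_d2_left[OF p, of a] unfolding eq .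
  qed
  then show ?thesis unfolding bilinear_def using linear_d2_left[OF p] by blast
qed

lemma d1_expand: "p \<in> U \<Longrightarrow> d1 X p a = fst a *\<^sub>R d1 X p (1, 0) + snd a *\<^sub>R d1 X p (0, 1)"
  using linear_pair_expand linear_d1 by blast

lemma d2_expand: assumes p: "p \<in> U"
  shows "d2 X p a b = fst a *\<^sub>R (fst b *\<^sub>R d2 X p (1, 0) (1, 0) + snd b *\<^sub>R d2 X p (1, 0) (0, 1))
                    + snd a *\<^sub>R (fst b *\<^sub>R d2 X p (0, 1) (1, 0) + snd b *\<^sub>R d2 X p (0, 1) (0, 1))"
proof -
  have "linear (\<lambda>b. d2 X p a b)" for a using bilinear_d2[OF p] unfolding bilinear_def by blast
  note right = linear_pair_expand[OF this]
  have "d2 X p a b = fst a *\<^sub>R d2 X p (1, 0) b + snd a *\<^sub>R d2 X p (0, 1) b"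
    by (rule linear_pair_expand[OF linear_d2_left[OF p]])
  then show ?thesis by (simp only: right[of "(1, 0)" b] right[of "(0, 1)" b])
qed

lemma linear_d3_left: "p \<in> U \<Longrightarrow> linear (\<lambda>a. d3 X p a b c)"
  using has_derivative_d2 has_derivative_linear by blast

lemma linear_d3_right: assumes p: "p \<in> U" shows "linear (d3 X p a b)"
proof -
  have eq: "d2 X q b (c1 + c2) = d2 X q b c1 + d2 X q b c2" "d2 X q b (k *\<^sub>R c1) = k *\<^sub>R d2 X q b c1"
    if "q \<in> U" for q c1 c2 k
    using bilinear_radd[OF bilinear_d2] bilinear_rmul[OF bilinear_d2] that by auto
  have add: "(\<lambda>a. d3 X p a b (c1 + c2)) = (\<lambda>a. d3 X p a b c1 + d3 X p a b c2)" for c1 c2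
    by (rule has_derivative_unique_on_open[OF has_derivative_d2[OF p]
          has_derivative_add[OF has_derivative_d2[OF p] has_derivative_d2[OF p]] open_U p])
      (simp add: eq)
  have scale: "(\<lambda>a. d3 X p a b (k *\<^sub>R c)) = (\<lambda>a. k *\<^sub>R d3 X p a b c)" for c k
    by (rule has_derivative_unique_on_open[OF has_derivative_d2[OF p]
          has_derivative_scaleR_right[OF has_derivative_d2[OF p]] open_U p])
      (simp add: eq)
  show ?thesis by (rule linearI) (simp_all add: add[THEN fun_cong] scale[THEN fun_cong])
qed

lemma d3_expand: assumes p: "p \<in> U"
  shows "d3 X p c a b = fst a *\<^sub>R (fst b *\<^sub>R d3 X p c (1, 0) (1, 0) + snd b *\<^sub>R d3 X p c (1, 0) (0, 1))
                      + snd a *\<^sub>R (fst b *\<^sub>R d3 X p c (0, 1) (1, 0) + snd b *\<^sub>R d3 X p c (0, 1) (0, 1))"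
proof -
  have left: "linear (\<lambda>a. d3 X p c a b)" for b
  proof -
    have eq: "(\<lambda>a. d3 X p a c b) = (\<lambda>a. d3 X p c a b)" by (rule ext) (rule d3_commute[OF p])
    show ?thesis using linear_d3_left[OF p, of c b] unfolding eq .
  qed
  note right = linear_pair_expand[OF linear_d3_right[OF p]]
  have "d3 X p c a b = fst a *\<^sub>R d3 X p c (1, 0) b + snd a *\<^sub>R d3 X p c (0, 1) b"
    by (rule linear_pair_expand[OF left])
  then show ?thesis by (simp only: right[of c "(1, 0)" b] right[of c "(0, 1)" b])
qed

lemma ctan_eq: "ctan X q 0 = d1 X q (1, 0)" "ctan X q 1 = d1 X q (0, 1)" "ctan X q (Suc 0) = d1 X q (0, 1)"
  by (simp_all add: ctan_def d1_def ebasis_def)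

lemma metric_eq: "metric X q i j = mink (d1 X q (ebasis i)) (d1 X q (ebasis j))"
  by (simp add: metric_def ctan_def d1_def)

lemma gdet_eq: "gdet X q = mink (d1 X q (1, 0)) (d1 X q (1, 0)) * mink (d1 X q (0, 1)) (d1 X q (0, 1))
   - mink (d1 X q (1, 0)) (d1 X q (0, 1)) * mink (d1 X q (1, 0)) (d1 X q (0, 1))"
  unfolding gdet_def metric_def ctan_eq using mink_commute[of "d1 X q (0, 1)" "d1 X q (1, 0)"] by simp

lemma ginv_eq:
  "ginv X q 0 0 = mink (d1 X q (0, 1)) (d1 X q (0, 1)) / gdet X q"
  "ginv X q 1 1 = mink (d1 X q (1, 0)) (d1 X q (1, 0)) / gdet X q"
  "ginv X q 0 1 = - mink (d1 X q (1, 0)) (d1 X q (0, 1)) / gdet X q"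
  "ginv X q 1 0 = - mink (d1 X q (1, 0)) (d1 X q (0, 1)) / gdet X q"
  by (simp_all add: ginv_def metric_def ctan_eq)

lemma coord_eq: "coord X q v =
   (ginv X q 0 0 * mink v (d1 X q (1, 0)) + ginv X q 0 1 * mink v (d1 X q (0, 1)),
    ginv X q 1 0 * mink v (d1 X q (1, 0)) + ginv X q 1 1 * mink v (d1 X q (0, 1)))"
  unfolding coord_def by (simp add: sum_lessThan_2 ebasis_def ctan_eq)

lemma coord_add [simp]: "coord X q (u + v) = coord X q u + coord X q v"
  and coord_diff [simp]: "coord X q (u - v) = coord X q u - coord X q v"
  and coord_scaleR [simp]: "coord X q (c *\<^sub>R v) = c *\<^sub>R coord X q v"
  and coord_minus [simp]: "coord X q (- v) = - coord X q v"
  by (simp_all add: coord_eq algebra_simps)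

lemma mink_d1_d1: assumes q: "q \<in> U" shows "mink (d1 X q a) (d1 X q b) =
   fst a * fst b * mink (d1 X q (1, 0)) (d1 X q (1, 0))
 + (fst a * snd b + snd a * fst b) * mink (d1 X q (1, 0)) (d1 X q (0, 1))
 + snd a * snd b * mink (d1 X q (0, 1)) (d1 X q (0, 1))"
  using mink_commute[of "d1 X q (0, 1)" "d1 X q (1, 0)"]
  unfolding d1_expand[OF q, of a] d1_expand[OF q, of b] by (simp add: algebra_simps)

lemma coord_d1: assumes q: "q \<in> U" shows "coord X q (d1 X q a) = a"
proof -
  define g00 where "g00 = mink (d1 X q (1, 0)) (d1 X q (1, 0))"
  define g01 where "g01 = mink (d1 X q (1, 0)) (d1 X q (0, 1))"
  define g11 where "g11 = mink (d1 X q (0, 1)) (d1 X q (0, 1))"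
  have D: "g00 * g11 - g01 * g01 \<noteq> 0"
    using gdet_nonzero[OF q] by (simp add: gdet_eq g00_def g01_def g11_def)
  have m: "mink (d1 X q a) (d1 X q (1, 0)) = fst a * g00 + snd a * g01"
       "mink (d1 X q a) (d1 X q (0, 1)) = fst a * g01 + snd a * g11"
    unfolding mink_d1_d1[OF q, of a "(1, 0)"] mink_d1_d1[OF q, of a "(0, 1)"]
    by (simp_all add: g00_def g01_def g11_def)
  have "g11 / (g00 * g11 - g01 * g01) * (fst a * g00 + snd a * g01)
      + - g01 / (g00 * g11 - g01 * g01) * (fst a * g01 + snd a * g11) = fst a"
       "- g01 / (g00 * g11 - g01 * g01) * (fst a * g00 + snd a * g01)
      + g00 / (g00 * g11 - g01 * g01) * (fst a * g01 + snd a * g11) = snd a"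
    using D by (simp_all add: divide_simps) (simp_all add: algebra_simps)
  then show ?thesis
    unfolding coord_eq m ginv_eq gdet_eq g00_def[symmetric] g01_def[symmetric] g11_def[symmetric]
    by (simp add: prod_eq_iff)
qed

lemma mink_d1_coord: assumes q: "q \<in> U"
  shows "mink (d1 X q (coord X q v)) (d1 X q b) = mink v (d1 X q b)"
proof -
  define g00 where "g00 = mink (d1 X q (1, 0)) (d1 X q (1, 0))"
  define g01 where "g01 = mink (d1 X q (1, 0)) (d1 X q (0, 1))"
  define g11 where "g11 = mink (d1 X q (0, 1)) (d1 X q (0, 1))"
  define m0 where "m0 = mink v (d1 X q (1, 0))"
  define m1 where "m1 = mink v (d1 X q (0, 1))"
  have D: "g00 * g11 - g01 * g01 \<noteq> 0"
    using gdet_nonzero[OF q] by (simp add: gdet_eq g00_def g01_def g11_def)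
  have c: "coord X q v = (g11 / (g00 * g11 - g01 * g01) * m0 + - g01 / (g00 * g11 - g01 * g01) * m1,
                         - g01 / (g00 * g11 - g01 * g01) * m0 + g00 / (g00 * g11 - g01 * g01) * m1)"
    unfolding coord_eq ginv_eq gdet_eq g00_def g01_def g11_def m0_def m1_def by simp
  have e: "mink (d1 X q (coord X q v)) (d1 X q (1, 0)) = fst (coord X q v) * g00 + snd (coord X q v) * g01"
       "mink (d1 X q (coord X q v)) (d1 X q (0, 1)) = fst (coord X q v) * g01 + snd (coord X q v) * g11"
    unfolding mink_d1_d1[OF q, of "coord X q v" "(1, 0)"] mink_d1_d1[OF q, of "coord X q v" "(0, 1)"]
    by (simp_all add: g00_def g01_def g11_def)
  have e0: "fst (coord X q v) * g00 + snd (coord X q v) * g01 = m0"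
    unfolding c using D by (simp add: divide_simps) (simp add: algebra_simps)
  have e1: "fst (coord X q v) * g01 + snd (coord X q v) * g11 = m1"
    unfolding c using D by (simp add: divide_simps) (simp add: algebra_simps)
  show ?thesis
    by (subst (1 2) d1_expand[OF q, of b]) (simp add: e e0 e1 m0_def m1_def)
qed

lemma tproj_eq: "q \<in> U \<Longrightarrow> tproj X q v = d1 X q (coord X q v)"
  unfolding tproj_def sum_lessThan_2 ctan_eq d1_expand[of q "coord X q v"]
  by (simp add: coord_eq algebra_simps scaleR_add_left)

lemma nproj_eq: "q \<in> U \<Longrightarrow> nproj X q v = v - d1 X q (coord X q v)"
  by (simp add: nproj_def tproj_eq)

lemma nproj_d1: "q \<in> U \<Longrightarrow> nproj X q (d1 X q a) = 0"
  by (simp add: nproj_eq coord_d1)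

lemma mink_nproj_d1: "q \<in> U \<Longrightarrow> mink (nproj X q v) (d1 X q b) = 0"
  by (simp add: nproj_eq mink_d1_coord)

lemma linear_nproj: assumes q: "q \<in> U" shows "linear (nproj X q)"
proof -
  have "linear (\<lambda>v. v - d1 X q (coord X q v))"
    using linear_d1[OF q] by (intro linearI) (simp_all add: linear_add linear_diff linear_scale algebra_simps)
  then show ?thesis by (simp add: nproj_eq[OF q, abs_def])
qed

lemma mink_nproj_nproj: assumes q: "q \<in> U"
  shows "mink (nproj X q u) (nproj X q w) = mink u (nproj X q w)"
proof -
  have "mink (d1 X q (coord X q u)) (nproj X q w) = 0"
    using mink_nproj_d1[OF q] mink_commute by metis
  then show ?thesis by (simp add: nproj_eq[OF q, of u])
qed

lemma mink_nproj_left: "q \<in> U \<Longrightarrow> mink (nproj X q u) w = mink (nproj X q u) (nproj X q w)"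
  using mink_nproj_nproj mink_commute by metis

lemma mink_tangential_part: assumes q: "q \<in> U"
  shows "mink u w - mink (d1 X q (coord X q u)) w = mink (nproj X q u) (nproj X q w)"
proof -
  have "mink (d1 X q (coord X q u)) w = mink (d1 X q (coord X q u)) (d1 X q (coord X q w))"
    using mink_d1_coord[OF q, of w "coord X q u"] mink_commute by metis
  also have "\<dots> = mink u (d1 X q (coord X q w))"
    using mink_d1_coord[OF q, of u "coord X q w"] .
  finally show ?thesis using mink_nproj_nproj[OF q, of u w] by (simp add: nproj_eq[OF q, of w])
qed

lemma ginv_null_frame:
  assumes q: "q \<in> U"
    and tt: "mink (d1 X q t) (d1 X q t) = 0" and ww: "mink (d1 X q w) (d1 X q w) = 0"
    and tw: "mink (d1 X q t) (d1 X q w) = -1"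
  shows "ginv X q 0 0 = -2 * fst t * fst w"
    "ginv X q 1 1 = -2 * snd t * snd w"
    "ginv X q 0 1 = - (fst t * snd w + snd t * fst w)"
    "ginv X q 1 0 = - (fst t * snd w + snd t * fst w)"
    "(fst t * snd w - snd t * fst w)\<^sup>2 * gdet X q = -1"
proof -
  define g00 where "g00 = mink (d1 X q (1, 0)) (d1 X q (1, 0))"
  define g01 where "g01 = mink (d1 X q (1, 0)) (d1 X q (0, 1))"
  define g11 where "g11 = mink (d1 X q (0, 1)) (d1 X q (0, 1))"
  define D where "D = g00 * g11 - g01 * g01"
  have D: "D \<noteq> 0" using gdet_nonzero[OF q] by (simp add: gdet_eq g00_def g01_def g11_def D_def)
  have "fst t * fst t * g00 + (fst t * snd t + snd t * fst t) * g01 + snd t * snd t * g11 = 0"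
       "fst w * fst w * g00 + (fst w * snd w + snd w * fst w) * g01 + snd w * snd w * g11 = 0"
       "fst t * fst w * g00 + (fst t * snd w + snd t * fst w) * g01 + snd t * snd w * g11 = -1"
    using tt ww tw unfolding mink_d1_d1[OF q, of t t] mink_d1_d1[OF q, of w w] mink_d1_d1[OF q, of t w]
      g00_def g01_def g11_def by simp_all
  then have "(fst t * snd w - snd t * fst w)\<^sup>2 * D = -1"
    "g11 = -2 * fst t * fst w * D" "g01 = (fst t * snd w + snd t * fst w) * D"
    "g00 = -2 * snd t * snd w * D"
    unfolding D_def by algebra+
  then show "ginv X q 0 0 = -2 * fst t * fst w" "ginv X q 1 1 = -2 * snd t * snd w"
    "ginv X q 0 1 = - (fst t * snd w + snd t * fst w)" "ginv X q 1 0 = - (fst t * snd w + snd t * fst w)"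
    "(fst t * snd w - snd t * fst w)\<^sup>2 * gdet X q = -1"
    unfolding ginv_eq gdet_eq g00_def[symmetric] g01_def[symmetric] g11_def[symmetric] D_def[symmetric]
    using D by (auto simp: divide_simps)
qed

lemma coord_null_frame:
  assumes q: "q \<in> U"
    and tt: "mink (d1 X q t) (d1 X q t) = 0" and ww: "mink (d1 X q w) (d1 X q w) = 0"
    and tw: "mink (d1 X q t) (d1 X q w) = -1"
  shows "coord X q v = (- mink v (d1 X q w)) *\<^sub>R t + (- mink v (d1 X q t)) *\<^sub>R w"
proof -
  have "mink v (d1 X q w) = fst w * mink v (d1 X q (1, 0)) + snd w * mink v (d1 X q (0, 1))"
       "mink v (d1 X q t) = fst t * mink v (d1 X q (1, 0)) + snd t * mink v (d1 X q (0, 1))"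
    by (subst d1_expand[OF q]; simp)+
  then show ?thesis
    unfolding coord_eq ginv_null_frame[OF q tt ww tw] by (simp add: prod_eq_iff algebra_simps)
qed

lemma d2_expand_right: assumes p: "p \<in> U"
  shows "d2 X p a b = fst b *\<^sub>R d2 X p a (1, 0) + snd b *\<^sub>R d2 X p a (0, 1)"
  using bilinear_d2[OF p] linear_pair_expand unfolding bilinear_def by blast

lemma has_derivative_d1_comp:
  assumes p: "p \<in> U" and a: "(a has_derivative a') (at p)"
  shows "((\<lambda>q. d1 X q (a q)) has_derivative (\<lambda>c. d2 X p c (a p) + d1 X p (a' c))) (at p)"
proof -
  have "((\<lambda>q. fst (a q) *\<^sub>R d1 X q (1, 0) + snd (a q) *\<^sub>R d1 X q (0, 1)) has_derivative
     (\<lambda>c. (fst (a p) *\<^sub>R d2 X p c (1, 0) + fst (a' c) *\<^sub>R d1 X p (1, 0)) +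
          (snd (a p) *\<^sub>R d2 X p c (0, 1) + snd (a' c) *\<^sub>R d1 X p (0, 1)))) (at p)"
    by (intro has_derivative_add has_derivative_scaleR has_derivative_fst has_derivative_snd
        a has_derivative_d1 p)
  then have "((\<lambda>q. fst (a q) *\<^sub>R d1 X q (1, 0) + snd (a q) *\<^sub>R d1 X q (0, 1)) has_derivative
     (\<lambda>c. d2 X p c (a p) + d1 X p (a' c))) (at p)"
    by (rule has_derivative_eq_rhs)
      (simp add: fun_eq_iff d2_expand_right[OF p, of _ "a p"] d1_expand[OF p, of "a' _"] algebra_simps)
  then show ?thesis
    by (rule has_derivative_transform_within_open[OF _ open_U p]) (simp add: d1_expand[symmetric])
qed

lemma has_derivative_d2_comp:
  assumes p: "p \<in> U" and a: "(a has_derivative a') (at p)" and b: "(b has_derivative b') (at p)"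
  shows "((\<lambda>q. d2 X q (a q) (b q)) has_derivative
           (\<lambda>c. d3 X p c (a p) (b p) + d2 X p (a' c) (b p) + d2 X p (a p) (b' c))) (at p)"
proof -
  let ?F = "\<lambda>q. fst (a q) *\<^sub>R (fst (b q) *\<^sub>R d2 X q (1, 0) (1, 0) + snd (b q) *\<^sub>R d2 X q (1, 0) (0, 1))
              + snd (a q) *\<^sub>R (fst (b q) *\<^sub>R d2 X q (0, 1) (1, 0) + snd (b q) *\<^sub>R d2 X q (0, 1) (0, 1))"
  have "(?F has_derivative
     (\<lambda>c. (fst (a p) *\<^sub>R ((fst (b p) *\<^sub>R d3 X p c (1, 0) (1, 0) + fst (b' c) *\<^sub>R d2 X p (1, 0) (1, 0))
              + (snd (b p) *\<^sub>R d3 X p c (1, 0) (0, 1) + snd (b' c) *\<^sub>R d2 X p (1, 0) (0, 1)))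
          + fst (a' c) *\<^sub>R (fst (b p) *\<^sub>R d2 X p (1, 0) (1, 0) + snd (b p) *\<^sub>R d2 X p (1, 0) (0, 1)))
        + (snd (a p) *\<^sub>R ((fst (b p) *\<^sub>R d3 X p c (0, 1) (1, 0) + fst (b' c) *\<^sub>R d2 X p (0, 1) (1, 0))
              + (snd (b p) *\<^sub>R d3 X p c (0, 1) (0, 1) + snd (b' c) *\<^sub>R d2 X p (0, 1) (0, 1)))
          + snd (a' c) *\<^sub>R (fst (b p) *\<^sub>R d2 X p (0, 1) (1, 0) + snd (b p) *\<^sub>R d2 X p (0, 1) (0, 1))))) (at p)"
    by (intro has_derivative_add has_derivative_scaleR has_derivative_fst has_derivative_snd
        a b has_derivative_d2 p)
  then have "(?F has_derivative
     (\<lambda>c. d3 X p c (a p) (b p) + d2 X p (a' c) (b p) + d2 X p (a p) (b' c))) (at p)"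
    by (rule has_derivative_eq_rhs)
      (simp add: fun_eq_iff d3_expand[OF p, of _ "a p" "b p"] d2_expand[OF p, of "a' _" "b p"]
        d2_expand[OF p, of "a p" "b' _"] algebra_simps)
  then show ?thesis
    by (rule has_derivative_transform_within_open[OF _ open_U p]) (simp add: d2_expand[symmetric])
qed

lemma differentiable_d1 [derivative_intros]:
  "p \<in> U \<Longrightarrow> a differentiable (at p) \<Longrightarrow> (\<lambda>q. d1 X q (a q)) differentiable (at p)"
  using has_derivative_d1_comp unfolding differentiable_def by blast

lemma differentiable_d2 [derivative_intros]:
  "p \<in> U \<Longrightarrow> a differentiable (at p) \<Longrightarrow> b differentiable (at p) \<Longrightarrow>
   (\<lambda>q. d2 X q (a q) (b q)) differentiable (at p)"
  using has_derivative_d2_comp unfolding differentiable_def by blast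

lemma differentiable_coord [derivative_intros]:
  assumes p: "p \<in> U" and b: "b differentiable (at p)"
  shows "(\<lambda>q. coord X q (b q)) differentiable (at p)"
proof -
  have "(\<lambda>q. gdet X q) differentiable (at p)"
    unfolding gdet_eq by (intro derivative_intros p)
  then show ?thesis
    unfolding coord_eq ginv_eq using gdet_nonzero[OF p] by (intro derivative_intros p b) auto
qed

lemma has_derivative_nproj:
  assumes p: "p \<in> U" and b: "(b has_derivative b') (at p)"
  obtains N' where "((\<lambda>q. nproj X q (b q)) has_derivative N') (at p)"
    "\<And>c. nproj X p (N' c) = nproj X p (b' c) - nproj X p (d2 X p c (coord X p (b p)))"
proof -
  obtain k' where k: "((\<lambda>q. coord X q (b q)) has_derivative k') (at p)"
    using differentiable_coord[OF p] b unfolding differentiable_def by blast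
  have "((\<lambda>q. b q - d1 X q (coord X q (b q))) has_derivative
      (\<lambda>c. b' c - (d2 X p c (coord X p (b p)) + d1 X p (k' c)))) (at p)"
    by (intro has_derivative_diff b has_derivative_d1_comp[OF p k])
  then have "((\<lambda>q. nproj X q (b q)) has_derivative
      (\<lambda>c. b' c - (d2 X p c (coord X p (b p)) + d1 X p (k' c)))) (at p)"
    by (rule has_derivative_transform_within_open[OF _ open_U p]) (simp add: nproj_eq)
  moreover have "nproj X p (b' c - (d2 X p c (coord X p (b p)) + d1 X p (k' c))) =
      nproj X p (b' c) - nproj X p (d2 X p c (coord X p (b p)))" for c
    using linear_nproj[OF p] by (simp add: linear_diff linear_add nproj_d1[OF p])
  ultimately show ?thesis using that by blast
qed

lemma has_derivative_zero_if_constant: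
  assumes "(f has_derivative f') (at p)" "p \<in> U" "\<And>q. q \<in> U \<Longrightarrow> f q = k"
  shows "f' c = 0"
proof -
  have "f' = (\<lambda>h. 0)"
    by (rule has_derivative_unique_on_open[OF assms(1) has_derivative_const open_U assms(2)])
      (use assms(3) in auto)
  then show ?thesis by simp
qed

text \<open>Gauss formula \<open>\<partial>\<^sub>a\<partial>\<^sub>b X = \<partial>\<^sub>c X + sff q a b\<close> with \<open>c = chr q a b\<close>:
  \<open>chr\<close> packages the Christoffel symbols, \<open>sff\<close> is the second fundamental form in
  parameter coordinates.\<close>

definition chr :: "real \<times> real \<Rightarrow> real \<times> real \<Rightarrow> real \<times> real \<Rightarrow> real \<times> real" where
  "chr q a b = coord X q (d2 X q a b)"

definition sff :: "real \<times> real \<Rightarrow> real \<times> real \<Rightarrow> real \<times> real \<Rightarrow> 'n mink" where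
  "sff q a b = nproj X q (d2 X q a b)"

lemma II_eq_sff: "II X q v w = sff q (coord X q v) (coord X q w)"
  by (simp add: II_def sff_def d2_def d1_def)

lemma d1_coord_tangent: assumes q: "q \<in> U" and v: "v \<in> tangent_space X q"
  shows "d1 X q (coord X q v) = v"
proof -
  from v obtain k where "v - k *\<^sub>R ctan X q 0 \<in> span {ctan X q 1}"
    unfolding tangent_space_def using span_breakdown_eq by blast
  then obtain m where "v - k *\<^sub>R ctan X q 0 = m *\<^sub>R ctan X q 1"
    unfolding span_singleton by auto
  then have "v = d1 X q (k, m)" by (simp add: d1_expand[OF q, of "(k, m)"] ctan_eq algebra_simps)
  then show ?thesis by (simp add: coord_d1[OF q])
qed

lemma sff_commute: "p \<in> U \<Longrightarrow> sff p a b = sff p b a"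
  by (simp add: sff_def d2_commute)

lemma sff_expand: assumes p: "p \<in> U"
  shows "sff p a b = fst a *\<^sub>R (fst b *\<^sub>R sff p (1, 0) (1, 0) + snd b *\<^sub>R sff p (1, 0) (0, 1))
                   + snd a *\<^sub>R (fst b *\<^sub>R sff p (0, 1) (1, 0) + snd b *\<^sub>R sff p (0, 1) (0, 1))"
  unfolding sff_def by (subst d2_expand[OF p]) (simp add: linear_add[OF linear_nproj[OF p]]
      linear_scale[OF linear_nproj[OF p]])

lemma mink_nproj_sff: "p \<in> U \<Longrightarrow> mink (nproj X p v) (sff p a b) = mink (nproj X p v) (d2 X p a b)"
  unfolding sff_def using mink_nproj_left by metis

lemma nproj_derivative_sff:
  assumes p: "p \<in> U" and a: "(a has_derivative a') (at p)" and b: "(b has_derivative b') (at p)"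
    and F: "\<And>q. q \<in> U \<Longrightarrow> F q = sff q (a q) (b q)"
  shows "(F has_derivative frechet_derivative F (at p)) (at p)"
    and "nproj X p (frechet_derivative F (at p) c)
           = nproj X p (d3 X p c (a p) (b p) + d2 X p (a' c) (b p) + d2 X p (a p) (b' c))
           - nproj X p (d2 X p c (chr p (a p) (b p)))"
proof -
  obtain N' where N': "((\<lambda>q. sff q (a q) (b q)) has_derivative N') (at p)"
    "\<And>c. nproj X p (N' c) = nproj X p (d3 X p c (a p) (b p) + d2 X p (a' c) (b p) + d2 X p (a p) (b' c))
        - nproj X p (d2 X p c (chr p (a p) (b p)))"
    using has_derivative_nproj[OF p has_derivative_d2_comp[OF p a b]]
    unfolding sff_def[symmetric] chr_def[symmetric] by blast
  have "(F has_derivative N') (at p)"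
    by (rule has_derivative_transform_within_open[OF N'(1) open_U p]) (simp add: F)
  then have "frechet_derivative F (at p) = N'" by (rule frechet_derivative_at[symmetric])
  then show "(F has_derivative frechet_derivative F (at p)) (at p)"
    and "nproj X p (frechet_derivative F (at p) c)
           = nproj X p (d3 X p c (a p) (b p) + d2 X p (a' c) (b p) + d2 X p (a p) (b' c))
           - nproj X p (d2 X p c (chr p (a p) (b p)))"
    using \<open>(F has_derivative N') (at p)\<close> N'(2) by simp_all
qed

lemma chr_commute: "p \<in> U \<Longrightarrow> chr p a b = chr p b a"
  by (simp add: chr_def d2_commute)

subsection \<open>The Gauss equation\<close>

lemma dmetric_eq: assumes q: "q \<in> U"
  shows "dmetric X q i j l = mink (d2 X q (ebasis i) (ebasis j)) (d1 X q (ebasis l))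
     + mink (d1 X q (ebasis j)) (d2 X q (ebasis i) (ebasis l))"
proof -
  have "((\<lambda>q. metric X q j l) has_derivative
     (\<lambda>c. mink (d2 X q c (ebasis j)) (d1 X q (ebasis l)) + mink (d1 X q (ebasis j)) (d2 X q c (ebasis l)))) (at q)"
    unfolding metric_eq by (rule has_derivative_mink[OF has_derivative_d1[OF q] has_derivative_d1[OF q]])
  then show ?thesis unfolding dmetric_def by (simp add: frechet_derivative_at[symmetric])
qed

lemma christoffel_eq: assumes q: "q \<in> U" and k: "k < 2"
  shows "christoffel X q k i j = chr q (ebasis i) (ebasis j) \<bullet> ebasis k"
proof -
  have "dmetric X q i j l + dmetric X q j i l - dmetric X q l i j
      = 2 * mink (d2 X q (ebasis i) (ebasis j)) (d1 X q (ebasis l))" for l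
    unfolding dmetric_eq[OF q]
    using d2_commute[OF q, of "ebasis j" "ebasis i"] d2_commute[OF q, of "ebasis l" "ebasis i"]
      d2_commute[OF q, of "ebasis l" "ebasis j"]
      mink_commute[of "d1 X q (ebasis i)" "d2 X q (ebasis j) (ebasis l)"]
      mink_commute[of "d1 X q (ebasis j)" "d2 X q (ebasis i) (ebasis l)"]
    by simp
  then have "christoffel X q k i j = (\<Sum>l<2. ginv X q k l * mink (d2 X q (ebasis i) (ebasis j)) (d1 X q (ebasis l)))"
    unfolding christoffel_def by (simp add: sum_distrib_left)
  also have "\<dots> = chr q (ebasis i) (ebasis j) \<bullet> ebasis k"
    using k unfolding chr_def coord_eq inner_ebasis sum_lessThan_2
    by (cases k) (auto simp: ebasis_def)
  finally show ?thesis .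
qed

lemma chr_expand_right: "p \<in> U \<Longrightarrow> chr p a b = fst b *\<^sub>R chr p a (1, 0) + snd b *\<^sub>R chr p a (0, 1)"
  unfolding chr_def by (subst d2_expand_right) simp_all

lemma has_derivative_chr:
  "p \<in> U \<Longrightarrow> ((\<lambda>q. chr q a b) has_derivative frechet_derivative (\<lambda>q. chr q a b) (at p)) (at p)"
  unfolding chr_def
  by (intro frechet_derivative_works[THEN iffD1] differentiable_coord differentiable_d2) simp_all

lemma frechet_derivative_christoffel: assumes p: "p \<in> U" and l: "l < 2"
  shows "frechet_derivative (\<lambda>q. christoffel X q l i j) (at p) =
     (\<lambda>c. frechet_derivative (\<lambda>q. chr q (ebasis i) (ebasis j)) (at p) c \<bullet> ebasis l)"
proof -
  have "((\<lambda>q. christoffel X q l i j) has_derivative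
      (\<lambda>c. frechet_derivative (\<lambda>q. chr q (ebasis i) (ebasis j)) (at p) c \<bullet> ebasis l)) (at p)"
    by (rule has_derivative_transform_within_open[OF has_derivative_inner_left[OF has_derivative_chr[OF p]]
          open_U p]) (simp add: christoffel_eq[OF _ l])
  then show ?thesis by (rule frechet_derivative_at[symmetric])
qed

text \<open>Differentiating \<open>\<langle>\<partial>\<^sub>c X, \<partial>\<^sub>e X\<rangle> = \<langle>\<partial>\<^sub>a\<partial>\<^sub>b X, \<partial>\<^sub>e X\<rangle>\<close> for \<open>c = chr q a b\<close>.\<close>

lemma mink_d1_derivative_chr: assumes p: "p \<in> U"
  and g: "((\<lambda>q. chr q a b) has_derivative g') (at p)"
  shows "mink (d1 X p (g' c)) (d1 X p e) = mink (d3 X p c a b) (d1 X p e) + mink (d2 X p a b) (d2 X p c e)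
     - mink (d2 X p c (chr p a b)) (d1 X p e) - mink (d1 X p (chr p a b)) (d2 X p c e)"
proof -
  have "(mink (d2 X p c (chr p a b) + d1 X p (g' c)) (d1 X p e) + mink (d1 X p (chr p a b)) (d2 X p c e))
      - (mink (d3 X p c a b) (d1 X p e) + mink (d2 X p a b) (d2 X p c e)) = 0"
  proof (rule has_derivative_zero_if_constant[OF has_derivative_diff[OF
          has_derivative_mink[OF has_derivative_d1_comp[OF p g] has_derivative_d1[OF p]]
          has_derivative_mink[OF has_derivative_d2[OF p] has_derivative_d1[OF p]]] p, where k = 0])
    fix q assume q: "q \<in> U"
    show "mink (d1 X q (chr q a b)) (d1 X q e) - mink (d2 X q a b) (d1 X q e) = 0"
      unfolding chr_def by (simp add: mink_d1_coord[OF q])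
  qed
  then show ?thesis by (simp add: algebra_simps)
qed

lemma riemann_eq: assumes p: "p \<in> U"
  shows "(\<Sum>l<2. riemann X p l 0 1 1 * metric X p l 0) = mink (d1 X p
      (frechet_derivative (\<lambda>q. chr q (0, 1) (0, 1)) (at p) (1, 0)
       - frechet_derivative (\<lambda>q. chr q (1, 0) (0, 1)) (at p) (0, 1)
       + chr p (1, 0) (chr p (0, 1) (0, 1)) - chr p (0, 1) (chr p (1, 0) (0, 1)))) (d1 X p (1, 0))"
proof -
  define e0 e1 where "e0 = ((1::real), (0::real))" and "e1 = ((0::real), (1::real))"
  have eb: "ebasis 0 = e0" "ebasis (Suc 0) = e1" "ebasis 1 = e1" by (simp_all add: ebasis_def e0_def e1_def)
  have ie: "v \<bullet> e0 = fst v" "v \<bullet> e1 = snd v" for v by (simp_all add: e0_def e1_def inner_prod_def)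
  define g11' g01' where "g11' = frechet_derivative (\<lambda>q. chr q e1 e1) (at p)"
    and "g01' = frechet_derivative (\<lambda>q. chr q e0 e1) (at p)"
  define R where "R = g11' e0 - g01' e1 + chr p e0 (chr p e1 e1) - chr p e1 (chr p e0 e1)"
  have "riemann X p l 0 1 1 = R \<bullet> ebasis l" if l: "l < 2" for l
  proof -
    have c: "christoffel X p k i j = chr p (ebasis i) (ebasis j) \<bullet> ebasis k" if "k < 2" for k i j
      using christoffel_eq[OF p that] .
    have "riemann X p l 0 1 1 = g11' e0 \<bullet> ebasis l - g01' e1 \<bullet> ebasis l
      + (chr p e0 e0 \<bullet> ebasis l * fst (chr p e1 e1) - chr p e1 e0 \<bullet> ebasis l * fst (chr p e0 e1)
       + (chr p e0 e1 \<bullet> ebasis l * snd (chr p e1 e1) - chr p e1 e1 \<bullet> ebasis l * snd (chr p e0 e1)))"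
      using c[of 0] c[of 1] unfolding riemann_def frechet_derivative_christoffel[OF p l] sum_lessThan_2 c[OF l]
      by (simp add: eb ie g11'_def g01'_def inner_ebasis)
    also have "\<dots> = R \<bullet> ebasis l"
      unfolding R_def chr_expand_right[OF p, of e0 "chr p e1 e1"]
        chr_expand_right[OF p, of e1 "chr p e0 e1"]
      by (simp add: inner_ebasis e0_def e1_def algebra_simps)
    finally show ?thesis .
  qed
  then have "riemann X p 0 0 (Suc 0) (Suc 0) = fst R" "riemann X p (Suc 0) 0 (Suc 0) (Suc 0) = snd R"
    by (simp_all add: inner_ebasis)
  then have "(\<Sum>l<2. riemann X p l 0 1 1 * metric X p l 0) = mink (d1 X p R) (d1 X p e0)"
    unfolding sum_lessThan_2 metric_eq eb d1_expand[OF p, of R] by (simp add: e0_def e1_def)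
  then show ?thesis by (simp add: R_def g11'_def g01'_def e0_def e1_def)
qed

lemma gauss_equation: assumes p: "p \<in> U"
  shows "gdet X p * gaussK X p = mink (sff p (0, 1) (0, 1)) (sff p (1, 0) (1, 0))
                                - mink (sff p (1, 0) (0, 1)) (sff p (1, 0) (0, 1))"
proof -
  define e0 e1 where "e0 = ((1::real), (0::real))" and "e1 = ((0::real), (1::real))"
  define g11' g01' where "g11' = frechet_derivative (\<lambda>q. chr q e1 e1) (at p)"
    and "g01' = frechet_derivative (\<lambda>q. chr q e0 e1) (at p)"
  define R where "R = g11' e0 - g01' e1 + chr p e0 (chr p e1 e1) - chr p e1 (chr p e0 e1)"
  have S: "(\<Sum>l<2. riemann X p l 0 1 1 * metric X p l 0) = mink (d1 X p R) (d1 X p e0)"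
    unfolding R_def g11'_def g01'_def e0_def e1_def by (rule riemann_eq[OF p])
  have mG: "mink (d1 X p (chr p a b)) (d1 X p e) = mink (d2 X p a b) (d1 X p e)" for a b e
    unfolding chr_def by (rule mink_d1_coord[OF p])
  have r1: "mink (d1 X p (g11' e0)) (d1 X p e0) = mink (d3 X p e0 e1 e1) (d1 X p e0) + mink (d2 X p e1 e1) (d2 X p e0 e0)
     - mink (d2 X p e0 (chr p e1 e1)) (d1 X p e0) - mink (d1 X p (chr p e1 e1)) (d2 X p e0 e0)"
    by (rule mink_d1_derivative_chr[OF p has_derivative_chr[OF p, of e1 e1, folded g11'_def]])
  have r2: "mink (d1 X p (g01' e1)) (d1 X p e0) = mink (d3 X p e1 e0 e1) (d1 X p e0) + mink (d2 X p e0 e1) (d2 X p e1 e0)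
     - mink (d2 X p e1 (chr p e0 e1)) (d1 X p e0) - mink (d1 X p (chr p e0 e1)) (d2 X p e1 e0)"
    by (rule mink_d1_derivative_chr[OF p has_derivative_chr[OF p, of e0 e1, folded g01'_def]])
  have q1: "mink (d2 X p e1 e1) (d2 X p e0 e0) - mink (d1 X p (chr p e1 e1)) (d2 X p e0 e0)
      = mink (sff p e1 e1) (sff p e0 e0)"
    unfolding chr_def sff_def by (rule mink_tangential_part[OF p])
  have q2: "mink (d2 X p e0 e1) (d2 X p e1 e0) - mink (d1 X p (chr p e0 e1)) (d2 X p e1 e0)
      = mink (sff p e0 e1) (sff p e0 e1)"
    unfolding chr_def sff_def mink_tangential_part[OF p] using d2_commute[OF p, of e1 e0] by simp
  have "mink (d1 X p R) (d1 X p e0) = mink (d1 X p (g11' e0)) (d1 X p e0) - mink (d1 X p (g01' e1)) (d1 X p e0)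
     + mink (d2 X p e0 (chr p e1 e1)) (d1 X p e0) - mink (d2 X p e1 (chr p e0 e1)) (d1 X p e0)"
    unfolding R_def linear_add[OF linear_d1[OF p]] linear_diff[OF linear_d1[OF p]] by (simp add: mG)
  then have "(\<Sum>l<2. riemann X p l 0 1 1 * metric X p l 0) = mink (sff p e1 e1) (sff p e0 e0) - mink (sff p e0 e1) (sff p e0 e1)"
    unfolding S r1 r2 d3_commute[OF p, of e1 e0] using q1 q2 by simp
  then show ?thesis unfolding gaussK_def using gdet_nonzero[OF p] by (simp add: e0_def e1_def)
qed

lemma mink_sff_det: assumes p: "p \<in> U"
  shows "mink (sff p a a) (sff p b b) - mink (sff p a b) (sff p a b)
    = (fst a * snd b - snd a * fst b)\<^sup>2 *
      (mink (sff p (1, 0) (1, 0)) (sff p (0, 1) (0, 1)) - mink (sff p (1, 0) (0, 1)) (sff p (1, 0) (0, 1)))"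
proof -
  define h00 h01 h11 where "h00 = sff p (1, 0) (1, 0)" and "h01 = sff p (1, 0) (0, 1)"
    and "h11 = sff p (0, 1) (0, 1)"
  have s: "sff p (0, 1) (1, 0) = h01" using sff_commute[OF p] h01_def by metis
  define m00 m01 m11 where "m00 = mink h00 h00" and "m01 = mink h01 h01" and "m11 = mink h11 h11"
  define n0 n1 n2 where "n0 = mink h00 h01" and "n1 = mink h00 h11" and "n2 = mink h01 h11"
  have c: "mink h01 h00 = n0" "mink h11 h00 = n1" "mink h11 h01 = n2"
    by (simp_all add: n0_def n1_def n2_def mink_commute)
  obtain a1 a2 b1 b2 where ab: "a = (a1, a2)" "b = (b1, b2)" by (cases a, cases b)
  show ?thesis
    unfolding ab sff_expand[OF p, of "(a1, a2)" "(a1, a2)"] sff_expand[OF p, of "(b1, b2)" "(b1, b2)"]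
      sff_expand[OF p, of "(a1, a2)" "(b1, b2)"]
      h00_def[symmetric] h01_def[symmetric] h11_def[symmetric] s fst_conv snd_conv
    by (simp only: mink_add_left mink_add_right mink_scaleR_left mink_scaleR_right c
        m00_def[symmetric] m01_def[symmetric] m11_def[symmetric]
        n0_def[symmetric] n1_def[symmetric] n2_def[symmetric]) algebra
qed

end

section \<open>Surfaces with a canonical null direction\<close>

locale null_frame_param = timelike_param U X
  for U :: "(real \<times> real) set" and X :: "real \<times> real \<Rightarrow> 'n::finite mink" +
  fixes Z :: "'n mink" and W :: "real \<times> real \<Rightarrow> 'n mink"
  assumes cnd: "canonical_null_direction U X Z"
    and W_tan: "\<forall>p\<in>U. W p \<in> tangent_space X p"
    and W_null: "\<forall>p\<in>U. lightlike (W p)"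
    and W_norm: "\<forall>p\<in>U. mink (tproj X p Z) (W p) = -1"
begin

text \<open>Parameter-plane coordinates of the null frame \<open>Z\<^sup>\<top>, W\<close>.\<close>

definition tau :: "real \<times> real \<Rightarrow> real \<times> real" where "tau q = coord X q Z"
definition omega :: "real \<times> real \<Rightarrow> real \<times> real" where "omega q = coord X q (W q)"

lemma tproj_Z_eq: "q \<in> U \<Longrightarrow> tproj X q Z = d1 X q (tau q)"
  by (simp add: tproj_eq tau_def)

lemma W_eq: "q \<in> U \<Longrightarrow> W q = d1 X q (omega q)"
  using d1_coord_tangent W_tan omega_def by auto

lemma nproj_Z_eq: "q \<in> U \<Longrightarrow> nproj X q Z = Z - d1 X q (tau q)"
  by (simp add: nproj_def tproj_Z_eq)

lemma tau_null: "q \<in> U \<Longrightarrow> mink (d1 X q (tau q)) (d1 X q (tau q)) = 0"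
  using cnd by (simp add: canonical_null_direction_def lightlike_def tproj_Z_eq)

lemma omega_null: "q \<in> U \<Longrightarrow> mink (d1 X q (omega q)) (d1 X q (omega q)) = 0"
  using W_null by (simp add: lightlike_def W_eq)

lemma tau_omega: "q \<in> U \<Longrightarrow> mink (d1 X q (tau q)) (d1 X q (omega q)) = -1"
  using W_norm by (simp add: tproj_Z_eq W_eq)

lemma tau_nonzero: assumes q: "q \<in> U" shows "tau q \<noteq> 0"
  using cnd q linear_0[OF linear_d1[OF q]]
  by (auto simp: canonical_null_direction_def lightlike_def tproj_Z_eq)

lemma coord_frame:
  "q \<in> U \<Longrightarrow> coord X q v = (- mink v (d1 X q (omega q))) *\<^sub>R tau q + (- mink v (d1 X q (tau q))) *\<^sub>R omega q"
  by (rule coord_null_frame[OF _ tau_null omega_null tau_omega])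

lemma mink_tau_d1: "q \<in> U \<Longrightarrow> mink (d1 X q (tau q)) (d1 X q a) = mink Z (d1 X q a)"
  unfolding tau_def by (rule mink_d1_coord)

text \<open>Nothing is assumed about the regularity of \<open>W\<close>.  But \<open>W\<close> is the unique null tangent
  vector with \<open>\<langle>Z\<^sup>\<top>, W\<rangle> = -1\<close>, hence equals \<open>u + (|u|\<^sup>2/2) Z\<^sup>\<top>\<close> for any tangent vector
  \<open>u\<close> with \<open>\<langle>u, Z\<^sup>\<top>\<rangle> = -1\<close>; an explicit such \<open>u\<close> makes \<open>W\<close> differentiable.\<close>

definition Zpair :: "real \<times> real \<Rightarrow> real \<times> real" where
  "Zpair q = (mink Z (d1 X q (1, 0)), mink Z (d1 X q (0, 1)))"

definition transversal :: "real \<times> real \<Rightarrow> real \<times> real" where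
  "transversal q = (-1 / (Zpair q \<bullet> Zpair q)) *\<^sub>R Zpair q"

lemma Zpair_nonzero: assumes q: "q \<in> U" shows "Zpair q \<noteq> 0"
proof
  assume "Zpair q = 0"
  then have "mink Z (d1 X q (1, 0)) = 0" "mink Z (d1 X q (0, 1)) = 0"
    by (simp_all add: Zpair_def zero_prod_def)
  then have "tau q = 0" by (simp add: tau_def coord_eq mink_commute[of Z] zero_prod_def)
  with tau_nonzero[OF q] show False ..
qed

lemma omega_explicit: assumes q: "q \<in> U"
  shows "omega q = transversal q + (mink (d1 X q (transversal q)) (d1 X q (transversal q)) / 2) *\<^sub>R tau q"
proof -
  let ?u = "transversal q"
  have u_tau: "mink (d1 X q ?u) (d1 X q (tau q)) = -1"
  proof -
    have "mink (d1 X q ?u) (d1 X q (tau q)) = mink Z (d1 X q ?u)"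
      using mink_tau_d1[OF q, of ?u] mink_commute by metis
    also have "\<dots> = ?u \<bullet> Zpair q"
      by (subst d1_expand[OF q]) (simp add: Zpair_def inner_prod_def)
    also have "\<dots> = -1" using Zpair_nonzero[OF q] by (simp add: transversal_def)
    finally show ?thesis .
  qed
  define k where "k = mink (d1 X q ?u) (d1 X q (omega q))"
  have "?u = (- k) *\<^sub>R tau q + omega q"
    using coord_frame[OF q, of "d1 X q ?u"] u_tau by (simp add: coord_d1[OF q] k_def)
  then have o: "omega q = ?u + k *\<^sub>R tau q" by (simp add: algebra_simps)
  have "0 = mink (d1 X q (omega q)) (d1 X q (omega q))" using omega_null[OF q] by simp
  also have "\<dots> = mink (d1 X q ?u) (d1 X q ?u) + 2 * k * mink (d1 X q ?u) (d1 X q (tau q))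
     + k * k * mink (d1 X q (tau q)) (d1 X q (tau q))"
    unfolding o linear_add[OF linear_d1[OF q]] linear_scale[OF linear_d1[OF q]]
    using mink_commute[of "d1 X q (tau q)" "d1 X q ?u"] by (simp add: algebra_simps)
  finally have "k = mink (d1 X q ?u) (d1 X q ?u) / 2" using u_tau tau_null[OF q] by simp
  then show ?thesis using o by simp
qed

lemma differentiable_tau: "p \<in> U \<Longrightarrow> tau differentiable (at p)"
  unfolding tau_def[abs_def] by (rule differentiable_coord) simp_all

lemma differentiable_omega: assumes p: "p \<in> U" shows "omega differentiable (at p)"
proof -
  have Zpair: "Zpair differentiable (at p)"
    unfolding Zpair_def[abs_def] by (intro derivative_intros p)
  have "transversal differentiable (at p)"
    unfolding transversal_def[abs_def] using Zpair_nonzero[OF p]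
    by (intro derivative_intros differentiable_inner Zpair) auto
  then have "(\<lambda>q. transversal q + (mink (d1 X q (transversal q)) (d1 X q (transversal q)) / 2) *\<^sub>R tau q)
      differentiable (at p)"
    by (intro derivative_intros p differentiable_tau) auto
  then obtain f' where "((\<lambda>q. transversal q + (mink (d1 X q (transversal q)) (d1 X q (transversal q)) / 2) *\<^sub>R tau q)
      has_derivative f') (at p)" unfolding differentiable_def by blast
  then have "(omega has_derivative f') (at p)"
    by (rule has_derivative_transform_within_open[OF _ open_U p]) (simp add: omega_explicit)
  then show ?thesis unfolding differentiable_def by blast
qed

definition tau' :: "real \<times> real \<Rightarrow> real \<times> real \<Rightarrow> real \<times> real" where
  "tau' p = frechet_derivative tau (at p)"

definition omega' :: "real \<times> real \<Rightarrow> real \<times> real \<Rightarrow> real \<times> real" where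
  "omega' p = frechet_derivative omega (at p)"

definition DT :: "real \<times> real \<Rightarrow> real \<times> real \<Rightarrow> 'n mink" where
  "DT p c = d2 X p c (tau p) + d1 X p (tau' p c)"

definition DW :: "real \<times> real \<Rightarrow> real \<times> real \<Rightarrow> 'n mink" where
  "DW p c = d2 X p c (omega p) + d1 X p (omega' p c)"

definition kappa :: "real \<times> real \<Rightarrow> real \<times> real \<Rightarrow> real" where
  "kappa p c = mink (nproj X p Z) (sff p c (omega p))"

lemma has_derivative_tau: "p \<in> U \<Longrightarrow> (tau has_derivative tau' p) (at p)"
  unfolding tau'_def using differentiable_tau frechet_derivative_works by blast

lemma has_derivative_omega: "p \<in> U \<Longrightarrow> (omega has_derivative omega' p) (at p)"
  unfolding omega'_def using differentiable_omega frechet_derivative_works by blast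

lemma has_derivative_T: "p \<in> U \<Longrightarrow> ((\<lambda>q. d1 X q (tau q)) has_derivative DT p) (at p)"
  unfolding DT_def[abs_def] by (rule has_derivative_d1_comp[OF _ has_derivative_tau])

lemma has_derivative_W: "p \<in> U \<Longrightarrow> ((\<lambda>q. d1 X q (omega q)) has_derivative DW p) (at p)"
  unfolding DW_def[abs_def] by (rule has_derivative_d1_comp[OF _ has_derivative_omega])

lemma mink_DT_T: assumes p: "p \<in> U" shows "mink (DT p c) (d1 X p (tau p)) = 0"
proof -
  have "mink (DT p c) (d1 X p (tau p)) + mink (d1 X p (tau p)) (DT p c) = 0"
    by (rule has_derivative_zero_if_constant[OF has_derivative_mink[OF has_derivative_T[OF p]
          has_derivative_T[OF p]] p, where k = 0]) (simp add: tau_null)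
  then show ?thesis using mink_commute[of "d1 X p (tau p)" "DT p c"] by simp
qed

lemma mink_DW_W: assumes p: "p \<in> U" shows "mink (DW p c) (d1 X p (omega p)) = 0"
proof -
  have "mink (DW p c) (d1 X p (omega p)) + mink (d1 X p (omega p)) (DW p c) = 0"
    by (rule has_derivative_zero_if_constant[OF has_derivative_mink[OF has_derivative_W[OF p]
          has_derivative_W[OF p]] p, where k = 0]) (simp add: omega_null)
  then show ?thesis using mink_commute[of "d1 X p (omega p)" "DW p c"] by simp
qed

lemma mink_DT_W_DW_T: "p \<in> U \<Longrightarrow> mink (DT p c) (d1 X p (omega p)) + mink (d1 X p (tau p)) (DW p c) = 0"
  by (rule has_derivative_zero_if_constant[OF has_derivative_mink[OF has_derivative_T has_derivative_W],
        where k = "-1"]) (simp_all add: tau_omega)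

text \<open>Differentiating \<open>\<langle>Z\<^sup>\<perp>, \<partial>\<^sub>a X\<rangle> = 0\<close>, with \<open>Z\<close> constant.\<close>

lemma mink_DT_d1: assumes p: "p \<in> U" shows "mink (DT p c) (d1 X p a) = mink (nproj X p Z) (d2 X p c a)"
proof -
  have d: "((\<lambda>q. Z - d1 X q (tau q)) has_derivative (\<lambda>c. 0 - DT p c)) (at p)"
    by (intro has_derivative_diff has_derivative_const has_derivative_T p)
  have "mink (0 - DT p c) (d1 X p a) + mink (Z - d1 X p (tau p)) (d2 X p c a) = 0"
    by (rule has_derivative_zero_if_constant[OF has_derivative_mink[OF d has_derivative_d1[OF p]] p,
          where k = 0]) (simp add: nproj_Z_eq[symmetric] mink_nproj_d1)
  then show ?thesis by (simp add: nproj_Z_eq[OF p])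
qed

lemma mink_nproj_Z_sff_tau: assumes p: "p \<in> U" shows "mink (nproj X p Z) (sff p c (tau p)) = 0"
  using mink_DT_d1[OF p, of c "tau p"] mink_DT_T[OF p, of c] mink_nproj_sff[OF p] by simp

lemma kappa_tau: "p \<in> U \<Longrightarrow> kappa p (tau p) = 0"
  unfolding kappa_def using mink_nproj_Z_sff_tau sff_commute by metis

lemma tau'_eq: assumes p: "p \<in> U" shows "tau' p c = (- kappa p c) *\<^sub>R tau p - chr p c (tau p)"
proof -
  have "tau' p c = coord X p (DT p c) - chr p c (tau p)"
    using coord_d1[OF p, of "tau' p c"] by (simp add: DT_def chr_def)
  moreover have "mink (DT p c) (d1 X p (omega p)) = kappa p c"
    unfolding kappa_def mink_DT_d1[OF p] mink_nproj_sff[OF p] ..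
  ultimately show ?thesis by (simp add: coord_frame[OF p, of "DT p c"] mink_DT_T[OF p])
qed

lemma omega'_eq: assumes p: "p \<in> U" shows "omega' p c = kappa p c *\<^sub>R omega p - chr p c (omega p)"
proof -
  have "omega' p c = coord X p (DW p c) - chr p c (omega p)"
    using coord_d1[OF p, of "omega' p c"] by (simp add: DW_def chr_def)
  moreover have "mink (DT p c) (d1 X p (omega p)) = kappa p c"
    unfolding kappa_def mink_DT_d1[OF p] mink_nproj_sff[OF p] ..
  then have "mink (DW p c) (d1 X p (tau p)) = - kappa p c"
    using mink_DT_W_DW_T[OF p, of c] mink_commute[of "d1 X p (tau p)" "DW p c"] by linarith
  ultimately show ?thesis by (simp add: coord_frame[OF p, of "DW p c"] mink_DW_W[OF p])
qed

lemma Hvec_eq: assumes q: "q \<in> U" shows "Hvec X q = - sff q (tau q) (omega q)"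
proof -
  note g = ginv_null_frame[OF q tau_null[OF q] omega_null[OF q] tau_omega[OF q]]
  have ii: "II X q (ctan X q i) (ctan X q j) = sff q (ebasis i) (ebasis j)" for i j
    by (simp add: II_eq_sff ctan_def d1_def[symmetric] coord_d1[OF q])
  show ?thesis
    unfolding Hvec_def sum_lessThan_2 ii sff_expand[OF q, of "tau q" "omega q"]
    using sff_commute[OF q, of "(0, 1)" "(1, 0)"]
    by (simp add: g g[unfolded One_nat_def] ebasis_def algebra_simps scaleR_add_right)
      (simp add: add.assoc[symmetric] scaleR_left_distrib[symmetric])
qed

lemma Hvec_eq_sff_minus: "q \<in> U \<Longrightarrow> Hvec X q = sff q (- tau q) (omega q)"
  using Hvec_eq linear_neg[OF linear_nproj] by (simp add: sff_def bilinear_lneg[OF bilinear_d2])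

lemma nabla_perp_Hvec_W: assumes p: "p \<in> U"
  shows "nabla_perp X (Hvec X) p (W p) =
      - nproj X p (d3 X p (tau p) (omega p) (omega p))
      + 2 *\<^sub>R nproj X p (d2 X p (omega p) (chr p (tau p) (omega p)))
      + nproj X p (d2 X p (tau p) (chr p (omega p) (omega p)))"
proof -
  define A B where "A = tau p" and "B = omega p"
  note d2 = bilinear_ladd[OF bilinear_d2[OF p]] bilinear_radd[OF bilinear_d2[OF p]]
    bilinear_lmul[OF bilinear_d2[OF p]] bilinear_rmul[OF bilinear_d2[OF p]]
    bilinear_lneg[OF bilinear_d2[OF p]] bilinear_rneg[OF bilinear_d2[OF p]]
    bilinear_lsub[OF bilinear_d2[OF p]] bilinear_rsub[OF bilinear_d2[OF p]]
  note np = linear_add[OF linear_nproj[OF p]] linear_diff[OF linear_nproj[OF p]]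
    linear_scale[OF linear_nproj[OF p]] linear_neg[OF linear_nproj[OF p]]
  have "nabla_perp X (Hvec X) p (W p) = nproj X p (frechet_derivative (Hvec X) (at p) B)"
    by (simp add: nabla_perp_def dirD_def omega_def B_def)
  also have "\<dots> = nproj X p (d3 X p B (- A) B + d2 X p (- tau' p B) B + d2 X p (- A) (omega' p B))
                 - nproj X p (d2 X p B (chr p (- A) B))"
    using nproj_derivative_sff(2)[OF p has_derivative_minus[OF has_derivative_tau[OF p]]
        has_derivative_omega[OF p] Hvec_eq_sff_minus] by (simp add: A_def B_def)
  also have "d3 X p B (- A) B = - d3 X p A B B"
    using d3_commute[OF p] linear_neg[OF linear_d3_left[OF p]] by metis
  also have "chr p (- A) B = - chr p A B"
    by (simp add: chr_def d2)
  also have "tau' p B = (- kappa p B) *\<^sub>R A - chr p A B"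
    using tau'_eq[OF p, of B] chr_commute[OF p] by (simp add: A_def)
  also have "omega' p B = kappa p B *\<^sub>R B - chr p B B"
    using omega'_eq[OF p, of B] by (simp add: B_def)
  finally show ?thesis
    using d2_commute[OF p, of "chr p A B" B]
    by (simp add: d2 np algebra_simps scaleR_2 flip: A_def B_def)
qed

lemma nabla_perp_II_WW_T: assumes p: "p \<in> U"
  shows "nabla_perp X (\<lambda>q. II X q (W q) (W q)) p (tproj X p Z) =
      nproj X p (d3 X p (tau p) (omega p) (omega p))
      - 2 *\<^sub>R nproj X p (d2 X p (omega p) (chr p (tau p) (omega p)))
      - nproj X p (d2 X p (tau p) (chr p (omega p) (omega p)))"
proof -
  define A B where "A = tau p" and "B = omega p"
  note d2 = bilinear_lneg[OF bilinear_d2[OF p]] bilinear_rneg[OF bilinear_d2[OF p]]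
  note np = linear_add[OF linear_nproj[OF p]] linear_diff[OF linear_nproj[OF p]]
    linear_neg[OF linear_nproj[OF p]]
  have II: "II X q (W q) (W q) = sff q (omega q) (omega q)" if "q \<in> U" for q
    by (simp add: II_eq_sff omega_def)
  have "nabla_perp X (\<lambda>q. II X q (W q) (W q)) p (tproj X p Z)
      = nproj X p (frechet_derivative (\<lambda>q. II X q (W q) (W q)) (at p) A)"
    by (simp add: nabla_perp_def dirD_def tproj_Z_eq[OF p] coord_d1[OF p] A_def)
  also have "\<dots> = nproj X p (d3 X p A B B + d2 X p (omega' p A) B + d2 X p B (omega' p A))
                 - nproj X p (d2 X p A (chr p B B))"
    using nproj_derivative_sff(2)[OF p has_derivative_omega[OF p] has_derivative_omega[OF p] II]
    by (simp add: B_def)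
  also have "omega' p A = - chr p A B"
    using omega'_eq[OF p, of A] kappa_tau[OF p] by (simp add: A_def B_def)
  finally show ?thesis
    using d2_commute[OF p, of "chr p A B" B]
    by (simp add: d2 np algebra_simps scaleR_2 flip: A_def B_def)
qed

lemma mink_Hvec_Hvec: assumes p: "p \<in> U"
  shows "mink (Hvec X p) (Hvec X p) = - mink (nabla_perp X (Hvec X) p (W p)) (nproj X p Z)"
proof -
  let ?H' = "frechet_derivative (Hvec X) (at p)"
  have dH: "(Hvec X has_derivative ?H') (at p)"
    by (rule nproj_derivative_sff(1)[OF p has_derivative_minus[OF has_derivative_tau[OF p]]
          has_derivative_omega[OF p] Hvec_eq_sff_minus])
  have dN: "((\<lambda>q. Z - d1 X q (tau q)) has_derivative (\<lambda>c. 0 - DT p c)) (at p)"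
    by (intro has_derivative_diff has_derivative_const has_derivative_T p)
  have "mink (?H' (omega p)) (Z - d1 X p (tau p)) + mink (Hvec X p) (0 - DT p (omega p)) = 0"
  proof (rule has_derivative_zero_if_constant[OF has_derivative_mink[OF dH dN] p, where k = 0])
    fix q assume q: "q \<in> U"
    have "mink (Hvec X q) (Z - d1 X q (tau q)) = - mink (nproj X q Z) (sff q (omega q) (tau q))"
      by (simp add: Hvec_eq[OF q] nproj_Z_eq[OF q, symmetric] sff_commute[OF q, of "tau q"]
          mink_commute[of "sff q (omega q) (tau q)"])
    then show "mink (Hvec X q) (Z - d1 X q (tau q)) = 0" using mink_nproj_Z_sff_tau[OF q] by simp
  qed
  moreover have "mink (Hvec X p) (DT p (omega p)) = mink (Hvec X p) (sff p (omega p) (tau p))"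
    using mink_nproj_left[OF p, of "- d2 X p (tau p) (omega p)" "d2 X p (omega p) (tau p)"]
    by (simp add: DT_def Hvec_eq[OF p] sff_def linear_neg[OF linear_nproj[OF p]] mink_nproj_d1[OF p])
  moreover have "mink (nabla_perp X (Hvec X) p (W p)) (nproj X p Z) = mink (?H' (omega p)) (Z - d1 X p (tau p))"
    unfolding nabla_perp_def dirD_def omega_def[symmetric] mink_nproj_nproj[OF p]
    by (simp only: nproj_Z_eq[OF p])
  ultimately show ?thesis
    by (simp add: Hvec_eq[OF p] sff_commute[OF p, of "omega p"])
qed

lemma nabla_perp_Hvec_W_eq: assumes p: "p \<in> U"
  shows "nabla_perp X (Hvec X) p (W p) = - nabla_perp X (\<lambda>q. II X q (W q) (W q)) p (tproj X p Z)"
  unfolding nabla_perp_Hvec_W[OF p] nabla_perp_II_WW_T[OF p] by (simp add: algebra_simps)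

lemma gaussK_eq: assumes p: "p \<in> U"
  shows "gaussK X p = mink (Hvec X p) (Hvec X p)
    - mink (II X p (W p) (W p)) (II X p (tproj X p Z) (tproj X p Z))"
proof -
  define \<delta> where "\<delta> = (fst (tau p) * snd (omega p) - snd (tau p) * fst (omega p))\<^sup>2"
  have \<delta>: "\<delta> * gdet X p = -1"
    using ginv_null_frame(5)[OF p tau_null[OF p] omega_null[OF p] tau_omega[OF p]] by (simp add: \<delta>_def)
  have "mink (sff p (tau p) (tau p)) (sff p (omega p) (omega p)) - mink (sff p (tau p) (omega p)) (sff p (tau p) (omega p))
     = \<delta> * (gdet X p * gaussK X p)"
    unfolding gauss_equation[OF p] \<delta>_def mink_sff_det[OF p, of "tau p" "omega p"]
    using mink_commute[of "sff p (0, 1) (0, 1)" "sff p (1, 0) (1, 0)"] by simp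
  also have "\<dots> = - gaussK X p" using \<delta> by (simp add: mult.assoc[symmetric])
  finally show ?thesis
    using mink_commute[of "sff p (tau p) (tau p)" "sff p (omega p) (omega p)"]
    by (simp add: Hvec_eq[OF p] II_eq_sff omega_def[symmetric] tproj_Z_eq[OF p] coord_d1[OF p])
qed

end

theorem mainTheorem6:
  fixes X :: "real \<times> real \<Rightarrow> 'n::finite mink"
    and U :: "(real \<times> real) set"
    and Z :: "'n mink"
    and W :: "real \<times> real \<Rightarrow> 'n mink"
  assumes surf: "timelike_surface U X"
    and Zunit: "mink Z Z = 1"
    and cnd: "canonical_null_direction U X Z"
    and W_tan: "\<forall>p\<in>U. W p \<in> tangent_space X p"
    and W_null: "\<forall>p\<in>U. lightlike (W p)"
    and W_norm: "\<forall>p\<in>U. mink (tproj X p Z) (W p) = -1"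
  shows "\<forall>p\<in>U.
      nabla_perp X (Hvec X) p (W p) =
        - nabla_perp X (\<lambda>q. II X q (W q) (W q)) p (tproj X p Z)
    \<and> mink (Hvec X p) (Hvec X p) =
        - mink (nabla_perp X (Hvec X) p (W p)) (nproj X p Z)
    \<and> gaussK X p =
        mink (Hvec X p) (Hvec X p) - mink (II X p (W p) (W p)) (II X p (tproj X p Z) (tproj X p Z))"
proof -
  interpret null_frame_param U X Z W
    by unfold_locales (fact surf cnd W_tan W_null W_norm)+
  show ?thesis
    using nabla_perp_Hvec_W_eq mink_Hvec_Hvec gaussK_eq by blast
qed

end
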